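(* Let $X$ be a finite $T_0$ topological space, $\mathcal V$ a multivector field on $X$ with $X$ invariant, and $\mathcal M=\{M_p\mid p\in\mathbb P\}$ a Morse predecomposition of $X$. If the strongly connected components of the digraph $G_{\mathcal M}$ form a partition $\mathcal Q$ of $\mathbb P$, then $\mathcal M':=\{M_Q\mid Q\in\mathcal Q\}$ is a Morse decomposition of $X$.
   Context: Notation: $\operatorname{cl}$ is closure; $A\subset X$ is locally closed if $\operatorname{cl}A\setminus A$ is closed. A multivector field $\mathcal V$ on $X$ is a partition of $X$ into locally closed sets (multivectors); $[x]_{\mathcal V}$ is the multivector containing $x$. A multivector $V$ is critical if $H(\operatorname{cl}V,\operatorname{cl}V\setminus V)$ (relative singular homology) is nontrivial, regular otherwise. $A$ is $\mathcal V$-compatible if it is a union of multivectors; $\langle A\rangle_{\mathcal V}$ is the smallest locally closed $\mathcal V$-compatible set containing $A$. $\Pi_{\mathcal V}(x)=\operatorname{cl}\{x\}\cup[x]_{\mathcal V}$. A solution is a partial map $\gamma:\mathbb Z\nrightarrow X$ with domain an integer interval and $\gamma(t+1)\in\Pi_{\mathcal V}(\gamma(t))$; a path has finite domain; a full solution has domain $\mathbb Z$. $\alpha(\gamma)=\langle\bigcap_{t\le0}\gamma((-\infty,t])\rangle_{\mathcal V}$, $\omega(\gamma)=\langle\bigcap_{t\ge0}\gamma([t,\infty))\rangle_{\mathcal V}$. A full solution is essential unless $\alpha(\gamma)$ or $\omega(\gamma)$ lies in a single regular multivector; an essential solution in $A$ has image in $A$. $\operatorname{Inv}S$ is the set of $x\in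 S$ with an essential solution $\gamma$ in $S$, $\gamma(0)=x$; $S$ is invariant if $\operatorname{Inv}S=S$. An invariant $S$ is isolated invariant if there is a closed $N\supset\Pi_{\mathcal V}(S)$ such that every path in $N$ with endpoints in $S$ has image in $S$. A link from $S_1$ to $S_2$ is a full solution $\gamma$ with $\alpha(\gamma)\cap S_1\ne\emptyset\ne\omega(\gamma)\cap S_2$; a link from $M_p$ to $M_q$ is trivial if $p=q$ and $\operatorname{im}\gamma\subset M_p$, non-trivial otherwise. A Morse predecomposition of $X$ is an indexed family $\{M_p\mid p\in\mathbb P\}$ of mutually disjoint isolated invariant subsets such that every essential solution in $X$ is a link from some $M_p$ to some $M_q$. $G_{\mathcal M}$ is the digraph with vertex set $\mathbb P$ and an edge $p\to q$ iff there is a non-trivial link from $M_p$ to $M_q$. A vertex set $A$ is strongly connected if for all $v,w\in A$ there is a walk of positive length from $v$ to $w$ inside $A$; a strongly connected component is an inclusion-maximal strongly connected set. A preorder $\le$ on $\mathbb P$ is admissible if a link from $M_p$ to $M_q$ implies $q\le p$. An invariant $T$ is saturated if every essential solution $\gamma$ in $X$ with $\alpha(\gamma)\cup\omega(\gamma)\subset T$ has $\operatorname{im}\gamma\subset T$. A Morse decomposition is a Morse predecomposition all of whose members are saturated and for which some admissible preorder is a partial order (here $\mathcal M'$ is indexed by $\mathcal Q$). $\mathbb P_C=\{p\mid M_p\cap C\ne\emptyset\}$; for $Q\subset\mathbb P$, $\operatorname{eSol}_Q(X)$ is the set of essential solutions $\gamma$ in $X$ with $\mathbb P_{\alpha(\gamma)}\cap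 Q\ne\emptyset\ne\mathbb P_{\omega(\gamma)}\cap Q$, and $M_Q=\bigcup\{\operatorname{im}\gamma\mid\gamma\in\operatorname{eSol}_Q(X)\}$. *)

theory Defs
  imports "HOL-Analysis.Analysis" "HOL-Homology.Homology"
begin

definition locally_closed :: "'a topology \<Rightarrow> 'a set \<Rightarrow> bool" where
  "locally_closed X A \<longleftrightarrow> A \<subseteq> topspace X \<and> closedin X (X closure_of A - A)"

definition multivector_field :: "'a topology \<Rightarrow> 'a set set \<Rightarrow> bool" where
  "multivector_field X V \<longleftrightarrow>
     \<Union>V = topspace X \<and> {} \<notin> V \<and>
     (\<forall>A\<in>V. \<forall>B\<in>V. A \<noteq> B \<longrightarrow> A \<inter> B = {}) \<and>
     (\<forall>A\<in>V. locally_closed X A)"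

definition mv :: "'a set set \<Rightarrow> 'a \<Rightarrow> 'a set" where
  "mv V x = (THE A. A \<in> V \<and> x \<in> A)"

definition critical :: "'a topology \<Rightarrow> 'a set \<Rightarrow> bool" where
  "critical X A \<longleftrightarrow>
     (\<exists>p. \<not> trivial_group
        (relative_homology_group p (subtopology X (X closure_of A)) (X closure_of A - A)))"

definition regular :: "'a topology \<Rightarrow> 'a set \<Rightarrow> bool" where
  "regular X A \<longleftrightarrow> \<not> critical X A"

definition compatible :: "'a set set \<Rightarrow> 'a set \<Rightarrow> bool" where
  "compatible V A \<longleftrightarrow> (\<exists>W\<subseteq>V. A = \<Union>W)"

definition lc_hull :: "'a topology \<Rightarrow> 'a set set \<Rightarrow> 'a set \<Rightarrow> 'a set" where
  "lc_hull X V A = \<Inter>{B. locally_closed X B \<and> compatible V B \<and> A \<subseteq> B}"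

definition Pi_V :: "'a topology \<Rightarrow> 'a set set \<Rightarrow> 'a \<Rightarrow> 'a set" where
  "Pi_V X V x = X closure_of {x} \<union> mv V x"

definition full_solution :: "'a topology \<Rightarrow> 'a set set \<Rightarrow> (int \<Rightarrow> 'a) \<Rightarrow> bool" where
  "full_solution X V \<gamma> \<longleftrightarrow>
     (\<forall>t. \<gamma> t \<in> topspace X) \<and> (\<forall>t. \<gamma> (t + 1) \<in> Pi_V X V (\<gamma> t))"

text \<open>Paths: solutions with finite (nonempty) domain {a..b}; values outside are irrelevant.\<close>
definition is_path :: "'a topology \<Rightarrow> 'a set set \<Rightarrow> int \<Rightarrow> int \<Rightarrow> (int \<Rightarrow> 'a) \<Rightarrow> bool" where
  "is_path X V a b \<gamma> \<longleftrightarrow> a \<le> b \<and>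
     (\<forall>t\<in>{a..b}. \<gamma> t \<in> topspace X) \<and> (\<forall>t\<in>{a..<b}. \<gamma> (t + 1) \<in> Pi_V X V (\<gamma> t))"

definition alpha_lim :: "'a topology \<Rightarrow> 'a set set \<Rightarrow> (int \<Rightarrow> 'a) \<Rightarrow> 'a set" where
  "alpha_lim X V \<gamma> = lc_hull X V (\<Inter>t\<in>{..0}. \<gamma> ` {..t})"

definition omega_lim :: "'a topology \<Rightarrow> 'a set set \<Rightarrow> (int \<Rightarrow> 'a) \<Rightarrow> 'a set" where
  "omega_lim X V \<gamma> = lc_hull X V (\<Inter>t\<in>{0..}. \<gamma> ` {t..})"

definition essential :: "'a topology \<Rightarrow> 'a set set \<Rightarrow> (int \<Rightarrow> 'a) \<Rightarrow> bool" where
  "essential X V \<gamma> \<longleftrightarrow> full_solution X V \<gamma> \<and>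
     \<not> ((\<exists>B\<in>V. regular X B \<and> alpha_lim X V \<gamma> \<subseteq> B) \<or>
        (\<exists>B\<in>V. regular X B \<and> omega_lim X V \<gamma> \<subseteq> B))"

definition essential_in :: "'a topology \<Rightarrow> 'a set set \<Rightarrow> 'a set \<Rightarrow> (int \<Rightarrow> 'a) \<Rightarrow> bool" where
  "essential_in X V A \<gamma> \<longleftrightarrow> essential X V \<gamma> \<and> range \<gamma> \<subseteq> A"

definition Inv :: "'a topology \<Rightarrow> 'a set set \<Rightarrow> 'a set \<Rightarrow> 'a set" where
  "Inv X V S = {x \<in> S. \<exists>\<gamma>. essential_in X V S \<gamma> \<and> \<gamma> 0 = x}"

definition invariant :: "'a topology \<Rightarrow> 'a set set \<Rightarrow> 'a set \<Rightarrow> bool" where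
  "invariant X V S \<longleftrightarrow> Inv X V S = S"

definition isolated_invariant :: "'a topology \<Rightarrow> 'a set set \<Rightarrow> 'a set \<Rightarrow> bool" where
  "isolated_invariant X V S \<longleftrightarrow> invariant X V S \<and>
     (\<exists>N. closedin X N \<and> (\<Union>x\<in>S. Pi_V X V x) \<subseteq> N \<and>
        (\<forall>a b \<gamma>. is_path X V a b \<gamma> \<and> \<gamma> ` {a..b} \<subseteq> N \<and> \<gamma> a \<in> S \<and> \<gamma> b \<in> S
            \<longrightarrow> \<gamma> ` {a..b} \<subseteq> S))"

definition is_link :: "'a topology \<Rightarrow> 'a set set \<Rightarrow> 'a set \<Rightarrow> 'a set \<Rightarrow> (int \<Rightarrow> 'a) \<Rightarrow> bool" where
  "is_link X V S1 S2 \<gamma> \<longleftrightarrow> full_solution X V \<gamma> \<and>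
     alpha_lim X V \<gamma> \<inter> S1 \<noteq> {} \<and> omega_lim X V \<gamma> \<inter> S2 \<noteq> {}"

definition morse_predecomposition ::
  "'a topology \<Rightarrow> 'a set set \<Rightarrow> 'p set \<Rightarrow> ('p \<Rightarrow> 'a set) \<Rightarrow> bool" where
  "morse_predecomposition X V P M \<longleftrightarrow>
     (\<forall>p\<in>P. \<forall>q\<in>P. p \<noteq> q \<longrightarrow> M p \<inter> M q = {}) \<and>
     (\<forall>p\<in>P. isolated_invariant X V (M p)) \<and>
     (\<forall>\<gamma>. essential_in X V (topspace X) \<gamma> \<longrightarrow>
        (\<exists>p\<in>P. \<exists>q\<in>P. is_link X V (M p) (M q) \<gamma>))"

definition G_edge :: "'a topology \<Rightarrow> 'a set set \<Rightarrow> ('p \<Rightarrow> 'a set) \<Rightarrow> 'p \<Rightarrow> 'p \<Rightarrow> bool" where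
  "G_edge X V M p q \<longleftrightarrow>
     (\<exists>\<gamma>. is_link X V (M p) (M q) \<gamma> \<and> \<not> (p = q \<and> range \<gamma> \<subseteq> M p))"

definition edges_within :: "('p \<Rightarrow> 'p \<Rightarrow> bool) \<Rightarrow> 'p set \<Rightarrow> ('p \<times> 'p) set" where
  "edges_within E A = {(v, w). v \<in> A \<and> w \<in> A \<and> E v w}"

definition strongly_connected :: "('p \<Rightarrow> 'p \<Rightarrow> bool) \<Rightarrow> 'p set \<Rightarrow> bool" where
  "strongly_connected E A \<longleftrightarrow> (\<forall>v\<in>A. \<forall>w\<in>A. (v, w) \<in> (edges_within E A)\<^sup>+)"

definition scc :: "('p \<Rightarrow> 'p \<Rightarrow> bool) \<Rightarrow> 'p set \<Rightarrow> 'p set \<Rightarrow> bool" where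
  "scc E P C \<longleftrightarrow> C \<subseteq> P \<and> strongly_connected E C \<and>
     (\<forall>D. C \<subseteq> D \<and> D \<subseteq> P \<and> strongly_connected E D \<longrightarrow> D = C)"

definition is_partition :: "'p set set \<Rightarrow> 'p set \<Rightarrow> bool" where
  "is_partition Q P \<longleftrightarrow> \<Union>Q = P \<and> {} \<notin> Q \<and> (\<forall>A\<in>Q. \<forall>B\<in>Q. A \<noteq> B \<longrightarrow> A \<inter> B = {})"

definition saturated :: "'a topology \<Rightarrow> 'a set set \<Rightarrow> 'a set \<Rightarrow> bool" where
  "saturated X V T \<longleftrightarrow> invariant X V T \<and>
     (\<forall>\<gamma>. essential_in X V (topspace X) \<gamma> \<and> alpha_lim X V \<gamma> \<union> omega_lim X V \<gamma> \<subseteq> T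
          \<longrightarrow> range \<gamma> \<subseteq> T)"

text \<open>Admissible preorder (as a relation R, (q,p) \<in> R meaning q \<le> p).\<close>
definition admissible_preorder ::
  "'a topology \<Rightarrow> 'a set set \<Rightarrow> 'p set \<Rightarrow> ('p \<Rightarrow> 'a set) \<Rightarrow> ('p \<times> 'p) set \<Rightarrow> bool" where
  "admissible_preorder X V P M R \<longleftrightarrow> R \<subseteq> P \<times> P \<and> refl_on P R \<and> trans R \<and>
     (\<forall>p\<in>P. \<forall>q\<in>P. (\<exists>\<gamma>. is_link X V (M p) (M q) \<gamma>) \<longrightarrow> (q, p) \<in> R)"

definition morse_decomposition ::
  "'a topology \<Rightarrow> 'a set set \<Rightarrow> 'p set \<Rightarrow> ('p \<Rightarrow> 'a set) \<Rightarrow> bool" where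
  "morse_decomposition X V P M \<longleftrightarrow> morse_predecomposition X V P M \<and>
     (\<forall>p\<in>P. saturated X V (M p)) \<and>
     (\<exists>R. admissible_preorder X V P M R \<and> antisym R)"

definition P_of :: "'p set \<Rightarrow> ('p \<Rightarrow> 'a set) \<Rightarrow> 'a set \<Rightarrow> 'p set" where
  "P_of P M C = {p \<in> P. M p \<inter> C \<noteq> {}}"

definition eSol :: "'a topology \<Rightarrow> 'a set set \<Rightarrow> 'p set \<Rightarrow> ('p \<Rightarrow> 'a set) \<Rightarrow> 'p set
    \<Rightarrow> (int \<Rightarrow> 'a) set" where
  "eSol X V P M Q = {\<gamma>. essential_in X V (topspace X) \<gamma> \<and>
      P_of P M (alpha_lim X V \<gamma>) \<inter> Q \<noteq> {} \<and> P_of P M (omega_lim X V \<gamma>) \<inter> Q \<noteq> {}}"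

definition M_union :: "'a topology \<Rightarrow> 'a set set \<Rightarrow> 'p set \<Rightarrow> ('p \<Rightarrow> 'a set) \<Rightarrow> 'p set \<Rightarrow> 'a set" where
  "M_union X V P M Q = \<Union>{range \<gamma> | \<gamma>. \<gamma> \<in> eSol X V P M Q}"

end

theory Submission
  imports Defs
begin

(*
  Call a set path-convex if it contains every point lying on a Pi_V-path between two of its
  points. Because the whole space is invariant, solutions can be extended along Pi_V-paths
  without changing their recurrent points, so two essential solutions can be spliced through
  any point on a path joining them. Hence every M_Q is path-convex, which makes it isolated
  invariant. In a finite space the alpha- and omega-limit sets reach, and are reached by, the
  recurrent points of the solution; so a link from M_Q to M_Q' produces a Pi_V-path from M_Q to
  M_Q', and splicing turns it into a walk in G_M from Q to Q'. Strongly connected components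
  joined by walks in both directions coincide: this gives the disjointness of the M_Q, their
  saturation, and the antisymmetry of the reachability order on the components.
*)

definition Pi_V_rel :: "'a topology \<Rightarrow> 'a set set \<Rightarrow> ('a \<times> 'a) set" where
  "Pi_V_rel X V = {(x, y). x \<in> topspace X \<and> y \<in> Pi_V X V x}"

lemma mv_eq:
  assumes "multivector_field X V" "A \<in> V" "x \<in> A"
  shows "mv V x = A"
  unfolding mv_def
proof (rule the_equality)
  show "A \<in> V \<and> x \<in> A" using assms by blast
  show "B = A" if "B \<in> V \<and> x \<in> B" for B
    using assms that unfolding multivector_field_def by blast
qed

lemma mv_in:
  assumes "multivector_field X V" "x \<in> topspace X"
  shows "mv V x \<in> V" and "x \<in> mv V x"
proof -
  obtain A where "A \<in> V" "x \<in> A" using assms unfolding multivector_field_def by blast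
  with mv_eq[OF assms(1) this] show "mv V x \<in> V" "x \<in> mv V x" by auto
qed

lemma mv_subset_topspace:
  assumes "multivector_field X V" "x \<in> topspace X"
  shows "mv V x \<subseteq> topspace X"
  using mv_in[OF assms] assms(1) unfolding multivector_field_def by blast

lemma Pi_V_subset_topspace:
  assumes "multivector_field X V" "x \<in> topspace X"
  shows "Pi_V X V x \<subseteq> topspace X"
  using mv_subset_topspace[OF assms] unfolding Pi_V_def by (simp add: closure_of_subset_topspace)

lemma Pi_V_rel_topspace:
  assumes "multivector_field X V" "(x, y) \<in> Pi_V_rel X V"
  shows "x \<in> topspace X" and "y \<in> topspace X"
  using assms Pi_V_subset_topspace[OF assms(1)] unfolding Pi_V_rel_def by auto

lemma Pi_V_rel_mv:
  assumes "multivector_field X V" "x \<in> topspace X" "y \<in> mv V x"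
  shows "(x, y) \<in> Pi_V_rel X V" and "(y, x) \<in> Pi_V_rel X V"
proof -
  have "y \<in> topspace X" using mv_subset_topspace[OF assms(1,2)] assms(3) by blast
  moreover have "x \<in> mv V y"
    using mv_eq[OF assms(1) mv_in(1)[OF assms(1,2)] assms(3)] mv_in(2)[OF assms(1,2)] by simp
  ultimately show "(x, y) \<in> Pi_V_rel X V" "(y, x) \<in> Pi_V_rel X V"
    using assms unfolding Pi_V_rel_def Pi_V_def by auto
qed

lemma Pi_V_rel_closure:
  assumes "x \<in> topspace X" "y \<in> X closure_of {x}"
  shows "(x, y) \<in> Pi_V_rel X V"
  using assms unfolding Pi_V_rel_def Pi_V_def by auto

section \<open>Solutions and their recurrent points\<close>

lemma rtrancl_int_chain:
  fixes s t :: int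
  assumes "s \<le> t" "\<forall>u\<in>{s..<t}. (\<gamma> u, \<gamma> (u + 1)) \<in> R"
  shows "(\<gamma> s, \<gamma> t) \<in> R\<^sup>*"
  using assms
proof (induction t rule: int_ge_induct)
  case (step u)
  then show ?case by (auto intro: rtrancl_into_rtrancl)
qed simp

lemma full_solution_reach:
  assumes "full_solution X V \<gamma>" "s \<le> t"
  shows "(\<gamma> s, \<gamma> t) \<in> (Pi_V_rel X V)\<^sup>*"
  using assms by (intro rtrancl_int_chain) (auto simp: full_solution_def Pi_V_rel_def)

lemma path_reach:
  assumes "is_path X V a b \<gamma>" "a \<le> s" "s \<le> t" "t \<le> b"
  shows "(\<gamma> s, \<gamma> t) \<in> (Pi_V_rel X V)\<^sup>*"
  using assms by (intro rtrancl_int_chain) (auto simp: is_path_def Pi_V_rel_def)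

lemma full_solution_shift:
  assumes "full_solution X V \<gamma>"
  shows "full_solution X V (\<lambda>s. \<gamma> (s + c))"
  using assms unfolding full_solution_def by (metis add.commute add.left_commute)

definition alpha_points :: "(int \<Rightarrow> 'a) \<Rightarrow> 'a set" where
  "alpha_points \<gamma> = (\<Inter>t\<in>{..0}. \<gamma> ` {..t})"

definition omega_points :: "(int \<Rightarrow> 'a) \<Rightarrow> 'a set" where
  "omega_points \<gamma> = (\<Inter>t\<in>{0..}. \<gamma> ` {t..})"

lemma alpha_lim_eq: "alpha_lim X V \<gamma> = lc_hull X V (alpha_points \<gamma>)"
  by (simp add: alpha_lim_def alpha_points_def)

lemma omega_lim_eq: "omega_lim X V \<gamma> = lc_hull X V (omega_points \<gamma>)"
  by (simp add: omega_lim_def omega_points_def)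

lemma omega_points_iff: "x \<in> omega_points \<gamma> \<longleftrightarrow> (\<forall>t. \<exists>s\<ge>t. \<gamma> s = x)"
proof -
  have "x \<in> omega_points \<gamma> \<longleftrightarrow> (\<forall>t\<ge>0. \<exists>s\<ge>t. \<gamma> s = x)"
    unfolding omega_points_def by blast
  also have "\<dots> \<longleftrightarrow> (\<forall>t. \<exists>s\<ge>t. \<gamma> s = x)"
    by (meson max.cobounded1 max.cobounded2 order_trans)
  finally show ?thesis .
qed

lemma alpha_points_iff: "x \<in> alpha_points \<gamma> \<longleftrightarrow> (\<forall>t. \<exists>s\<le>t. \<gamma> s = x)"
proof -
  have "x \<in> alpha_points \<gamma> \<longleftrightarrow> (\<forall>t\<le>0. \<exists>s\<le>t. \<gamma> s = x)"
    unfolding alpha_points_def by blast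
  also have "\<dots> \<longleftrightarrow> (\<forall>t. \<exists>s\<le>t. \<gamma> s = x)"
    by (meson min.cobounded1 min.cobounded2 order_trans)
  finally show ?thesis .
qed

lemma alpha_points_reflect: "alpha_points \<gamma> = omega_points (\<lambda>s. \<gamma> (- s))"
proof -
  have "(\<exists>s\<le>t. \<gamma> s = x) \<longleftrightarrow> (\<exists>s\<ge>- t. \<gamma> (- s) = x)" for t x
    by (metis minus_minus neg_le_iff_le)
  moreover have "(\<forall>t. \<exists>s\<ge>- t. \<gamma> (- s) = x) \<longleftrightarrow> (\<forall>t. \<exists>s\<ge>t. \<gamma> (- s) = x)" for x
    by (metis minus_minus)
  ultimately show ?thesis
    unfolding set_eq_iff alpha_points_iff omega_points_iff by simp
qed

lemma omega_points_cong:
  assumes "\<And>s. s \<ge> t0 \<Longrightarrow> \<gamma> s = \<eta> s"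
  shows "omega_points \<gamma> = omega_points \<eta>"
proof -
  have "(\<exists>s\<ge>max t t0. \<gamma> s = x) \<longleftrightarrow> (\<exists>s\<ge>max t t0. \<eta> s = x)" for t x
    using assms by auto
  then show ?thesis
    unfolding set_eq_iff omega_points_iff by (meson max.cobounded1 order_trans)
qed

lemma omega_points_shift: "omega_points (\<lambda>s. \<gamma> (s + c)) = omega_points \<gamma>"
proof -
  have "(\<exists>s\<ge>t. \<gamma> (s + c) = x) \<longleftrightarrow> (\<exists>s\<ge>t + c. \<gamma> s = x)" for t x
    by (metis add_le_cancel_right diff_add_cancel)
  then show ?thesis
    unfolding set_eq_iff omega_points_iff by (metis diff_add_cancel)
qed

lemma alpha_points_cong:
  assumes "\<And>s. s \<le> t0 \<Longrightarrow> \<gamma> s = \<eta> s"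
  shows "alpha_points \<gamma> = alpha_points \<eta>"
  unfolding alpha_points_reflect using assms by (intro omega_points_cong[of "- t0"]) simp

lemma alpha_points_shift: "alpha_points (\<lambda>s. \<gamma> (s + c)) = alpha_points \<gamma>"
  unfolding alpha_points_reflect using omega_points_shift[of "\<lambda>s. \<gamma> (- s)" "- c"] by simp

lemma omega_points_subset_range: "omega_points \<gamma> \<subseteq> range \<gamma>"
proof
  fix x assume "x \<in> omega_points \<gamma>"
  then obtain s where "\<gamma> s = x" unfolding omega_points_iff by blast
  then show "x \<in> range \<gamma>" by blast
qed

lemma alpha_points_subset_range: "alpha_points \<gamma> \<subseteq> range \<gamma>"
proof
  fix x assume "x \<in> alpha_points \<gamma>"
  then obtain s where "\<gamma> s = x" unfolding alpha_points_iff by blast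
  then show "x \<in> range \<gamma>" by blast
qed

lemma omega_points_nonempty:
  assumes "finite (range \<gamma>)"
  shows "omega_points \<gamma> \<noteq> {}"
proof
  assume "omega_points \<gamma> = {}"
  then have "\<forall>x. \<exists>t. \<forall>s\<ge>t. \<gamma> s \<noteq> x" by (simp add: set_eq_iff omega_points_iff)
  then obtain T where T: "\<And>x s. s \<ge> T x \<Longrightarrow> \<gamma> s \<noteq> x" by metis
  define u where "u = Max (T ` range \<gamma>)"
  have "T (\<gamma> u) \<le> u" unfolding u_def using assms by (intro Max_ge) auto
  then show False using T by blast
qed

lemma alpha_points_nonempty:
  assumes "finite (range \<gamma>)"
  shows "alpha_points \<gamma> \<noteq> {}"
proof -
  have "range (\<lambda>s. \<gamma> (- s)) = range \<gamma>" by (metis surj_def minus_minus image_image)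
  then show ?thesis unfolding alpha_points_reflect using omega_points_nonempty assms by metis
qed

definition solution_join :: "(int \<Rightarrow> 'a) \<Rightarrow> int \<Rightarrow> (int \<Rightarrow> 'a) \<Rightarrow> int \<Rightarrow> int \<Rightarrow> 'a" where
  "solution_join \<gamma> k \<eta> j = (\<lambda>s. if s \<le> 0 then \<gamma> (s + k) else \<eta> (s - 1 + j))"

lemma solution_join_0 [simp]: "solution_join \<gamma> k \<eta> j 0 = \<gamma> k"
  by (simp add: solution_join_def)

lemma solution_join_1 [simp]: "solution_join \<gamma> k \<eta> j 1 = \<eta> j"
  by (simp add: solution_join_def)

lemma full_solution_solution_join:
  assumes "full_solution X V \<gamma>" "full_solution X V \<eta>" "\<eta> j \<in> Pi_V X V (\<gamma> k)"
  shows "full_solution X V (solution_join \<gamma> k \<eta> j)"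
  unfolding full_solution_def
proof (intro allI conjI)
  fix t
  show "solution_join \<gamma> k \<eta> j t \<in> topspace X"
    using assms(1,2) by (simp add: solution_join_def full_solution_def)
  consider "t < 0" | "t = 0" | "t > 0" by linarith
  then show "solution_join \<gamma> k \<eta> j (t + 1) \<in> Pi_V X V (solution_join \<gamma> k \<eta> j t)"
  proof cases
    case 1
    then have "solution_join \<gamma> k \<eta> j (t + 1) = \<gamma> (t + k + 1)"
      and "solution_join \<gamma> k \<eta> j t = \<gamma> (t + k)"
      by (simp_all add: solution_join_def algebra_simps)
    moreover have "\<gamma> (t + k + 1) \<in> Pi_V X V (\<gamma> (t + k))"
      using assms(1) unfolding full_solution_def by blast
    ultimately show ?thesis by simp
  next
    case 2
    then show ?thesis using assms(3) by simp
  next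
    case 3
    then have "solution_join \<gamma> k \<eta> j (t + 1) = \<eta> (t - 1 + j + 1)"
      and "solution_join \<gamma> k \<eta> j t = \<eta> (t - 1 + j)"
      by (simp_all add: solution_join_def)
    moreover have "\<eta> (t - 1 + j + 1) \<in> Pi_V X V (\<eta> (t - 1 + j))"
      using assms(2) unfolding full_solution_def by blast
    ultimately show ?thesis by simp
  qed
qed

lemma alpha_points_solution_join: "alpha_points (solution_join \<gamma> k \<eta> j) = alpha_points \<gamma>"
  using alpha_points_cong[of 0 "solution_join \<gamma> k \<eta> j" "\<lambda>s. \<gamma> (s + k)"]
  by (simp add: solution_join_def alpha_points_shift)

lemma omega_points_solution_join: "omega_points (solution_join \<gamma> k \<eta> j) = omega_points \<eta>"
proof -
  have "omega_points (solution_join \<gamma> k \<eta> j) = omega_points (\<lambda>s. \<eta> (s + (j - 1)))"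
    by (rule omega_points_cong[of 1]) (simp add: solution_join_def algebra_simps)
  also have "\<dots> = omega_points \<eta>" by (rule omega_points_shift)
  finally show ?thesis .
qed

lemma invariant_topspace_full_solution:
  assumes "invariant X V (topspace X)" "x \<in> topspace X"
  obtains \<gamma> where "full_solution X V \<gamma>" "\<gamma> 0 = x"
  using assms unfolding invariant_def Inv_def essential_in_def essential_def by blast

lemma full_solution_extend_forward:
  assumes inv: "invariant X V (topspace X)" and mvf: "multivector_field X V"
    and "full_solution X V \<gamma>" and "(\<gamma> k, y) \<in> (Pi_V_rel X V)\<^sup>*"
  shows "\<exists>\<eta> j. full_solution X V \<eta> \<and> alpha_points \<eta> = alpha_points \<gamma> \<and> \<eta> j = y"
  using assms(4)
proof (induction rule: rtrancl_induct)
  case base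
  then show ?case using assms(3) by blast
next
  case (step y0 y)
  then obtain \<eta> j where \<eta>: "full_solution X V \<eta>" "alpha_points \<eta> = alpha_points \<gamma>" "\<eta> j = y0"
    by blast
  obtain \<zeta> where \<zeta>: "full_solution X V \<zeta>" "\<zeta> 0 = y"
    using invariant_topspace_full_solution[OF inv Pi_V_rel_topspace(2)[OF mvf step(2)]] .
  have "full_solution X V (solution_join \<eta> j \<zeta> 0)"
    using \<eta> \<zeta> step(2) by (intro full_solution_solution_join) (auto simp: Pi_V_rel_def)
  moreover have "solution_join \<eta> j \<zeta> 0 1 = y" using \<zeta>(2) by simp
  ultimately show ?case using \<eta>(2) alpha_points_solution_join by metis
qed

lemma full_solution_extend_backward:
  assumes inv: "invariant X V (topspace X)" and mvf: "multivector_field X V"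
    and "full_solution X V \<gamma>" and "(y, \<gamma> k) \<in> (Pi_V_rel X V)\<^sup>*"
  shows "\<exists>\<eta> j. full_solution X V \<eta> \<and> omega_points \<eta> = omega_points \<gamma> \<and> \<eta> j = y"
  using assms(4)
proof (induction rule: converse_rtrancl_induct)
  case base
  then show ?case using assms(3) by blast
next
  case (step y y0)
  then obtain \<eta> j where \<eta>: "full_solution X V \<eta>" "omega_points \<eta> = omega_points \<gamma>" "\<eta> j = y0"
    by blast
  obtain \<zeta> where \<zeta>: "full_solution X V \<zeta>" "\<zeta> 0 = y"
    using invariant_topspace_full_solution[OF inv Pi_V_rel_topspace(1)[OF mvf step(1)]] .
  have "full_solution X V (solution_join \<zeta> 0 \<eta> j)"
    using \<eta> \<zeta> step(1) by (intro full_solution_solution_join) (auto simp: Pi_V_rel_def)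
  moreover have "solution_join \<zeta> 0 \<eta> j 0 = y" using \<zeta>(2) by simp
  ultimately show ?case using \<eta>(2) omega_points_solution_join by metis
qed

lemma full_solution_connect:
  assumes inv: "invariant X V (topspace X)" and mvf: "multivector_field X V"
    and "full_solution X V \<gamma>1" "full_solution X V \<gamma>2"
    and "(\<gamma>1 s, y) \<in> (Pi_V_rel X V)\<^sup>*" "(y, \<gamma>2 t) \<in> (Pi_V_rel X V)\<^sup>*"
  obtains \<gamma> where "full_solution X V \<gamma>" "alpha_points \<gamma> = alpha_points \<gamma>1"
    "omega_points \<gamma> = omega_points \<gamma>2" "\<gamma> 0 = y"
proof -
  obtain \<eta>1 j1 where \<eta>1: "full_solution X V \<eta>1" "alpha_points \<eta>1 = alpha_points \<gamma>1" "\<eta>1 j1 = y"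
    using full_solution_extend_forward[OF inv mvf assms(3,5)] by blast
  obtain \<eta>2 j2 where \<eta>2: "full_solution X V \<eta>2" "omega_points \<eta>2 = omega_points \<gamma>2" "\<eta>2 j2 = y"
    using full_solution_extend_backward[OF inv mvf assms(4,6)] by blast
  have "\<eta>2 (j2 + 1) \<in> Pi_V X V (\<eta>1 j1)"
    using \<eta>1(3) \<eta>2(1,3) unfolding full_solution_def by metis
  then have "full_solution X V (solution_join \<eta>1 j1 \<eta>2 (j2 + 1))"
    using \<eta>1(1) \<eta>2(1) by (rule full_solution_solution_join[rotated 2])
  then show thesis
    using that \<eta>1 \<eta>2 by (simp add: alpha_points_solution_join omega_points_solution_join)
qed

lemma essential_shift:
  assumes "essential X V \<gamma>"
  shows "essential X V (\<lambda>s. \<gamma> (s + c))"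
  using assms full_solution_shift[of X V \<gamma> c] unfolding essential_def
  by (simp add: alpha_lim_eq omega_lim_eq alpha_points_shift omega_points_shift)

section \<open>Path-convex sets and hulls in finite spaces\<close>

lemma closure_of_finite_eq_UN_singletons:
  assumes "finite A"
  shows "X closure_of A = (\<Union>a\<in>A. X closure_of {a})"
  using closure_of_Union[of "(\<lambda>a. {a}) ` A" X] assms by simp

lemma locally_closed_if_closure_convex:
  assumes fin: "finite (topspace X)" and "A \<subseteq> topspace X"
    and convex: "\<And>a b c. a \<in> A \<Longrightarrow> c \<in> A \<Longrightarrow>
      a \<in> X closure_of {b} \<Longrightarrow> b \<in> X closure_of {c} \<Longrightarrow> b \<in> A"
  shows "locally_closed X A"
proof -
  define D where "D = X closure_of A - A"
  have "finite A" using finite_subset[OF assms(2) fin] .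
  have "X closure_of {b} \<subseteq> D" if "b \<in> D" for b
  proof
    fix a assume a: "a \<in> X closure_of {b}"
    obtain c where "c \<in> A" "b \<in> X closure_of {c}"
      using \<open>b \<in> D\<close> closure_of_finite_eq_UN_singletons[OF \<open>finite A\<close>, of X]
      unfolding D_def by blast
    then have "a \<notin> A" using convex a \<open>b \<in> D\<close> unfolding D_def by blast
    moreover have "X closure_of {b} \<subseteq> X closure_of A"
      using \<open>b \<in> D\<close> unfolding D_def by (simp add: closure_of_minimal)
    ultimately show "a \<in> D" using a unfolding D_def by blast
  qed
  moreover have "D \<subseteq> topspace X"
    unfolding D_def using closure_of_subset_topspace[of X A] by blast
  ultimately have D_eq: "D = (\<Union>b\<in>D. X closure_of {b})"
    using closure_of_subset[of "{b}" X for b] by blast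
  have "closedin X (\<Union>b\<in>D. X closure_of {b})"
    using finite_subset[OF \<open>D \<subseteq> topspace X\<close> fin] by (intro closedin_Union) auto
  then have "closedin X D" by (subst D_eq)
  then show ?thesis using assms(2) unfolding locally_closed_def D_def by blast
qed

lemma subset_lc_hull: "T \<subseteq> lc_hull X V T"
  unfolding lc_hull_def by blast

definition path_convex :: "'a topology \<Rightarrow> 'a set set \<Rightarrow> 'a set \<Rightarrow> bool" where
  "path_convex X V S \<longleftrightarrow>
     (\<forall>x\<in>S. \<forall>z\<in>S. \<forall>y. (x, y) \<in> (Pi_V_rel X V)\<^sup>* \<and> (y, z) \<in> (Pi_V_rel X V)\<^sup>* \<longrightarrow> y \<in> S)"

lemma path_convexD:
  assumes "path_convex X V S" "x \<in> S" "z \<in> S"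
    and "(x, y) \<in> (Pi_V_rel X V)\<^sup>*" "(y, z) \<in> (Pi_V_rel X V)\<^sup>*"
  shows "y \<in> S"
  using assms unfolding path_convex_def by blast

lemma locally_closed_if_path_convex:
  assumes fin: "finite (topspace X)" and "S \<subseteq> topspace X" and "path_convex X V S"
  shows "locally_closed X S"
proof (rule locally_closed_if_closure_convex[OF fin assms(2)])
  fix a b c assume "a \<in> S" "c \<in> S" "a \<in> X closure_of {b}" "b \<in> X closure_of {c}"
  moreover have "c \<in> topspace X" using \<open>c \<in> S\<close> assms(2) by blast
  moreover have "b \<in> topspace X"
    using \<open>b \<in> X closure_of {c}\<close> closure_of_subset_topspace[of X "{c}"] by blast
  ultimately have "(c, b) \<in> Pi_V_rel X V" "(b, a) \<in> Pi_V_rel X V"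
    by (simp_all add: Pi_V_rel_closure)
  then show "b \<in> S" by (intro path_convexD[OF assms(3) \<open>c \<in> S\<close> \<open>a \<in> S\<close>]) auto
qed

lemma compatible_if_path_convex:
  assumes mvf: "multivector_field X V" and "S \<subseteq> topspace X" and "path_convex X V S"
  shows "compatible V S"
proof -
  have "x \<in> \<Union>{B \<in> V. B \<subseteq> S}" if "x \<in> S" for x
  proof -
    have x: "x \<in> topspace X" using that assms(2) by blast
    have "mv V x \<subseteq> S"
      using path_convexD[OF assms(3) that that] Pi_V_rel_mv[OF mvf x] by blast
    then show ?thesis using mv_in[OF mvf x] by blast
  qed
  then show ?thesis unfolding compatible_def by (intro exI[of _ "{B \<in> V. B \<subseteq> S}"]) auto
qed

lemma lc_hull_subset_if_path_convex:
  assumes "finite (topspace X)" "multivector_field X V"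
    and "S \<subseteq> topspace X" "path_convex X V S" "T \<subseteq> S"
  shows "lc_hull X V T \<subseteq> S"
  unfolding lc_hull_def
  using assms locally_closed_if_path_convex[OF assms(1,3,4)] compatible_if_path_convex[OF assms(2,3,4)]
  by (intro Inter_lower) simp

lemma rtrancl_Pi_V_rel_topspace:
  assumes "(y, z) \<in> (Pi_V_rel X V)\<^sup>*" "z \<in> topspace X"
  shows "y \<in> topspace X"
  using assms by (induction rule: converse_rtrancl_induct) (auto simp: Pi_V_rel_def)

lemma lc_hull_reachable:
  assumes fin: "finite (topspace X)" and mvf: "multivector_field X V"
    and "T \<subseteq> topspace X" and "y \<in> lc_hull X V T"
  shows "\<exists>t\<in>T. (t, y) \<in> (Pi_V_rel X V)\<^sup>*" and "\<exists>t\<in>T. (y, t) \<in> (Pi_V_rel X V)\<^sup>*"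
proof -
  define H where "H = {y \<in> topspace X.
    (\<exists>t\<in>T. (t, y) \<in> (Pi_V_rel X V)\<^sup>*) \<and> (\<exists>t\<in>T. (y, t) \<in> (Pi_V_rel X V)\<^sup>*)}"
  have convex: "path_convex X V H"
    unfolding path_convex_def
  proof (intro ballI allI impI, elim conjE)
    fix x z y assume "x \<in> H" "z \<in> H"
      and xy: "(x, y) \<in> (Pi_V_rel X V)\<^sup>*" and yz: "(y, z) \<in> (Pi_V_rel X V)\<^sup>*"
    obtain t1 t2 where "t1 \<in> T" "(t1, x) \<in> (Pi_V_rel X V)\<^sup>*" "t2 \<in> T" "(z, t2) \<in> (Pi_V_rel X V)\<^sup>*"
      using \<open>x \<in> H\<close> \<open>z \<in> H\<close> unfolding H_def by blast
    then have "(t1, y) \<in> (Pi_V_rel X V)\<^sup>*" "(y, t2) \<in> (Pi_V_rel X V)\<^sup>*"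
      using rtrancl_trans[OF _ xy] rtrancl_trans[OF yz] by blast+
    moreover have "y \<in> topspace X"
      using rtrancl_Pi_V_rel_topspace[OF yz] \<open>z \<in> H\<close> unfolding H_def by blast
    ultimately show "y \<in> H" using \<open>t1 \<in> T\<close> \<open>t2 \<in> T\<close> unfolding H_def by blast
  qed
  have "H \<subseteq> topspace X" "T \<subseteq> H" using assms(3) unfolding H_def by blast+
  then have "lc_hull X V T \<subseteq> H" using lc_hull_subset_if_path_convex[OF fin mvf _ convex] by blast
  with assms(4) have "y \<in> H" by blast
  then show "\<exists>t\<in>T. (t, y) \<in> (Pi_V_rel X V)\<^sup>*" "\<exists>t\<in>T. (y, t) \<in> (Pi_V_rel X V)\<^sup>*"
    unfolding H_def by simp_all
qed

lemma alpha_lim_reaches_omega_lim: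
  assumes fin: "finite (topspace X)" and mvf: "multivector_field X V"
    and \<gamma>: "full_solution X V \<gamma>"
    and "y \<in> alpha_lim X V \<gamma>" "z \<in> omega_lim X V \<gamma>"
  shows "(y, z) \<in> (Pi_V_rel X V)\<^sup>*"
proof -
  have "range \<gamma> \<subseteq> topspace X" using \<gamma> unfolding full_solution_def by blast
  then have "alpha_points \<gamma> \<subseteq> topspace X" "omega_points \<gamma> \<subseteq> topspace X"
    by (metis alpha_points_subset_range omega_points_subset_range order_trans)+
  then obtain u w where u: "u \<in> alpha_points \<gamma>" "(y, u) \<in> (Pi_V_rel X V)\<^sup>*"
    and w: "w \<in> omega_points \<gamma>" "(w, z) \<in> (Pi_V_rel X V)\<^sup>*"
    using lc_hull_reachable[OF fin mvf] assms(4,5) unfolding alpha_lim_eq omega_lim_eq by meson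
  obtain s s' where "\<gamma> s = u" "s \<le> 0" "\<gamma> s' = w" "0 \<le> s'"
    using u(1) w(1) unfolding alpha_points_iff omega_points_iff by meson
  then have "(u, w) \<in> (Pi_V_rel X V)\<^sup>*" using full_solution_reach[OF \<gamma>, of s s'] by simp
  then show ?thesis using u(2) w(2) by (meson rtrancl_trans)
qed

section \<open>Strongly connected components\<close>

lemma strongly_connected_trancl:
  assumes "strongly_connected E A" "A \<subseteq> B" "v \<in> A" "w \<in> A"
  shows "(v, w) \<in> (edges_within E B)\<^sup>+"
proof -
  have "edges_within E A \<subseteq> edges_within E B"
    using assms(2) unfolding edges_within_def by auto
  then show ?thesis using assms(1,3,4) trancl_mono unfolding strongly_connected_def by blast
qed

lemma rtrancl_edges_within_mem:
  assumes "(u, v) \<in> (edges_within E P)\<^sup>*" "u \<in> P"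
  shows "v \<in> P"
  using assms by (induction rule: rtrancl_induct) (auto simp: edges_within_def)

lemma rtrancl_restrict_to_interval:
  assumes "(a, b) \<in> R\<^sup>*" and "\<And>v. (a, v) \<in> R\<^sup>* \<Longrightarrow> (v, b) \<in> R\<^sup>* \<Longrightarrow> v \<in> C"
  shows "(a, b) \<in> (R \<inter> C \<times> C)\<^sup>*"
  using assms
proof (induction rule: rtrancl_induct)
  case (step b' b)
  have "(a, b') \<in> (R \<inter> C \<times> C)\<^sup>*"
  proof (rule step.IH)
    fix v assume "(a, v) \<in> R\<^sup>*" "(v, b') \<in> R\<^sup>*"
    then show "v \<in> C" using step.prems rtrancl_into_rtrancl[OF _ step.hyps(2)] by blast
  qed
  moreover have "b' \<in> C" "b \<in> C"
    using step.prems step.hyps rtrancl_into_rtrancl[OF step.hyps] by blast+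
  ultimately show ?case using step.hyps(2) by (blast intro: rtrancl_into_rtrancl)
qed simp

text \<open>The class of vertices mutually reachable with \<open>p\<close> is strongly connected and contains
  \<open>C\<close>, so by maximality it is \<open>C\<close>.\<close>
lemma scc_mem_if_reachable_both_ways:
  assumes "scc E P C" "p \<in> C" "(p, v) \<in> (edges_within E P)\<^sup>*" "(v, p) \<in> (edges_within E P)\<^sup>*"
  shows "v \<in> C"
proof -
  let ?R = "edges_within E P"
  define D where "D = {u \<in> P. (p, u) \<in> ?R\<^sup>* \<and> (u, p) \<in> ?R\<^sup>*}"
  have C: "C \<subseteq> P" "strongly_connected E C"
    and maximal: "\<And>D. C \<subseteq> D \<Longrightarrow> D \<subseteq> P \<Longrightarrow> strongly_connected E D \<Longrightarrow> D = C"
    using assms(1) unfolding scc_def by blast+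
  have "p \<in> P" using assms(2) C(1) by blast
  have "C \<subseteq> D"
  proof
    fix u assume "u \<in> C"
    then have "(p, u) \<in> ?R\<^sup>+" "(u, p) \<in> ?R\<^sup>+"
      using strongly_connected_trancl[OF C(2,1)] assms(2) by blast+
    then show "u \<in> D" using \<open>u \<in> C\<close> C(1) unfolding D_def by (auto dest: trancl_into_rtrancl)
  qed
  have "D \<subseteq> P" unfolding D_def by blast
  then have R_D: "edges_within E D = ?R \<inter> D \<times> D" unfolding edges_within_def by blast
  have within_D: "(u, w) \<in> (edges_within E D)\<^sup>*"
    if uw: "(u, w) \<in> ?R\<^sup>*" and pu: "(p, u) \<in> ?R\<^sup>*" and wp: "(w, p) \<in> ?R\<^sup>*" for u w
    unfolding R_D
  proof (rule rtrancl_restrict_to_interval[OF uw])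
    fix x assume "(u, x) \<in> ?R\<^sup>*" "(x, w) \<in> ?R\<^sup>*"
    then have "(p, x) \<in> ?R\<^sup>*" "(x, p) \<in> ?R\<^sup>*"
      using rtrancl_trans[OF pu] rtrancl_trans[OF _ wp] by blast+
    then show "x \<in> D" using rtrancl_edges_within_mem[OF _ \<open>p \<in> P\<close>] unfolding D_def by blast
  qed
  have "strongly_connected E D"
    unfolding strongly_connected_def
  proof (intro ballI)
    fix u w assume "u \<in> D" "w \<in> D"
    then have "(u, p) \<in> (edges_within E D)\<^sup>*" "(p, w) \<in> (edges_within E D)\<^sup>*"
      using within_D[of u p] within_D[of p w] unfolding D_def by simp_all
    moreover have "(p, p) \<in> (edges_within E D)\<^sup>+"
      using strongly_connected_trancl[OF C(2) \<open>C \<subseteq> D\<close> assms(2,2)] .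
    ultimately show "(u, w) \<in> (edges_within E D)\<^sup>+"
      by (meson rtrancl_trancl_trancl trancl_rtrancl_trancl)
  qed
  then have "D = C" using maximal \<open>C \<subseteq> D\<close> \<open>D \<subseteq> P\<close> by blast
  moreover have "v \<in> D"
    using rtrancl_edges_within_mem[OF assms(3) \<open>p \<in> P\<close>] assms(3,4) unfolding D_def by blast
  ultimately show ?thesis by blast
qed

lemma scc_rtrancl:
  assumes "scc E P C" "v \<in> C" "w \<in> C"
  shows "(v, w) \<in> (edges_within E P)\<^sup>*"
  using assms strongly_connected_trancl[of E C P v w] unfolding scc_def by auto

lemma scc_eq_if_reachable_both_ways:
  assumes A: "scc E P A" and B: "scc E P B"
    and "p \<in> A" "q \<in> B" "(p, q) \<in> (edges_within E P)\<^sup>*"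
    and "q' \<in> B" "p' \<in> A" "(q', p') \<in> (edges_within E P)\<^sup>*"
  shows "A = B"
proof
  show "B \<subseteq> A"
  proof
    fix b assume "b \<in> B"
    have "(p, b) \<in> (edges_within E P)\<^sup>*"
      using assms(5) scc_rtrancl[OF B \<open>q \<in> B\<close> \<open>b \<in> B\<close>] by (rule rtrancl_trans)
    moreover have "(b, p) \<in> (edges_within E P)\<^sup>*"
      using scc_rtrancl[OF B \<open>b \<in> B\<close> \<open>q' \<in> B\<close>] assms(8) scc_rtrancl[OF A \<open>p' \<in> A\<close> \<open>p \<in> A\<close>]
      by (meson rtrancl_trans)
    ultimately show "b \<in> A" using scc_mem_if_reachable_both_ways[OF A \<open>p \<in> A\<close>] by blast
  qed
  show "A \<subseteq> B"
  proof
    fix a assume "a \<in> A"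
    have "(q', a) \<in> (edges_within E P)\<^sup>*"
      using assms(8) scc_rtrancl[OF A \<open>p' \<in> A\<close> \<open>a \<in> A\<close>] by (rule rtrancl_trans)
    moreover have "(a, q') \<in> (edges_within E P)\<^sup>*"
      using scc_rtrancl[OF A \<open>a \<in> A\<close> \<open>p \<in> A\<close>] assms(5) scc_rtrancl[OF B \<open>q \<in> B\<close> \<open>q' \<in> B\<close>]
      by (meson rtrancl_trans)
    ultimately show "a \<in> B" using scc_mem_if_reachable_both_ways[OF B \<open>q' \<in> B\<close>] by blast
  qed
qed

text \<open>Following \<open>admissible_preorder\<close>, a pair \<open>(B, A)\<close> reads \<open>B \<le> A\<close>: the component \<open>B\<close>
  can be reached from \<open>A\<close>.\<close>
definition scc_reach :: "('p \<Rightarrow> 'p \<Rightarrow> bool) \<Rightarrow> 'p set \<Rightarrow> 'p set set \<Rightarrow> ('p set \<times> 'p set) set" where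
  "scc_reach E P Q =
     {(B, A). A \<in> Q \<and> B \<in> Q \<and> (\<exists>p\<in>A. \<exists>q\<in>B. (p, q) \<in> (edges_within E P)\<^sup>*)}"

lemma refl_on_scc_reach:
  assumes "{} \<notin> Q"
  shows "refl_on Q (scc_reach E P Q)"
proof (rule refl_onI)
  fix A assume "A \<in> Q"
  then have "A \<noteq> {}" using assms by blast
  then obtain p where "p \<in> A" by blast
  then show "(A, A) \<in> scc_reach E P Q" using \<open>A \<in> Q\<close> unfolding scc_reach_def by blast
qed

lemma trans_scc_reach:
  assumes "\<And>C. C \<in> Q \<Longrightarrow> scc E P C"
  shows "trans (scc_reach E P Q)"
proof (rule transI)
  fix A B C assume "(A, B) \<in> scc_reach E P Q" "(B, C) \<in> scc_reach E P Q"
  then obtain p q p' q' where "p \<in> B" "q \<in> A" "(p, q) \<in> (edges_within E P)\<^sup>*"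
    and "p' \<in> C" "q' \<in> B" "(p', q') \<in> (edges_within E P)\<^sup>*" and "A \<in> Q" "B \<in> Q" "C \<in> Q"
    unfolding scc_reach_def by blast
  moreover have "(q', p) \<in> (edges_within E P)\<^sup>*"
    using scc_rtrancl[OF assms[OF \<open>B \<in> Q\<close>] \<open>q' \<in> B\<close> \<open>p \<in> B\<close>] .
  ultimately show "(A, C) \<in> scc_reach E P Q"
    unfolding scc_reach_def by (blast intro: rtrancl_trans)
qed

lemma antisym_scc_reach:
  assumes "\<And>C. C \<in> Q \<Longrightarrow> scc E P C"
  shows "antisym (scc_reach E P Q)"
proof (rule antisymI)
  fix A B assume "(A, B) \<in> scc_reach E P Q" "(B, A) \<in> scc_reach E P Q"
  then obtain p q p' q' where "p \<in> B" "q \<in> A" "(p, q) \<in> (edges_within E P)\<^sup>*"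
    and "p' \<in> A" "q' \<in> B" "(p', q') \<in> (edges_within E P)\<^sup>*" and "A \<in> Q" "B \<in> Q"
    unfolding scc_reach_def by blast
  then show "A = B"
    using scc_eq_if_reachable_both_ways[OF assms[OF \<open>A \<in> Q\<close>] assms[OF \<open>B \<in> Q\<close>]
        \<open>p' \<in> A\<close> \<open>q' \<in> B\<close> _ \<open>p \<in> B\<close> \<open>q \<in> A\<close>] by blast
qed

section \<open>The sets \<open>M_Q\<close>\<close>

lemma mem_M_union_iff: "x \<in> M_union X V P M A \<longleftrightarrow> (\<exists>\<delta>\<in>eSol X V P M A. \<exists>t. \<delta> t = x)"
  unfolding M_union_def by blast

lemma range_subset_M_union: "\<delta> \<in> eSol X V P M A \<Longrightarrow> range \<delta> \<subseteq> M_union X V P M A"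
  unfolding M_union_def by blast

lemma M_union_subset_topspace: "M_union X V P M A \<subseteq> topspace X"
  unfolding M_union_def eSol_def essential_in_def by blast

lemma essential_connect:
  assumes inv: "invariant X V (topspace X)" and mvf: "multivector_field X V"
    and "essential X V \<delta>1" "essential X V \<delta>2"
    and "(\<delta>1 s, y) \<in> (Pi_V_rel X V)\<^sup>*" "(y, \<delta>2 t) \<in> (Pi_V_rel X V)\<^sup>*"
  obtains \<gamma> where "essential X V \<gamma>" "range \<gamma> \<subseteq> topspace X" "\<gamma> 0 = y"
    "alpha_lim X V \<gamma> = alpha_lim X V \<delta>1" "omega_lim X V \<gamma> = omega_lim X V \<delta>2"
proof -
  have \<delta>: "full_solution X V \<delta>1" "full_solution X V \<delta>2"
    using assms(3,4) unfolding essential_def by blast+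
  obtain \<gamma> where \<gamma>: "full_solution X V \<gamma>" "alpha_points \<gamma> = alpha_points \<delta>1"
    "omega_points \<gamma> = omega_points \<delta>2" "\<gamma> 0 = y"
    by (rule full_solution_connect[OF inv mvf \<delta> assms(5,6)])
  then have "alpha_lim X V \<gamma> = alpha_lim X V \<delta>1" "omega_lim X V \<gamma> = omega_lim X V \<delta>2"
    by (simp_all add: alpha_lim_eq omega_lim_eq)
  moreover have "essential X V \<gamma>"
    using assms(3,4) \<gamma>(1) calculation unfolding essential_def by simp
  moreover have "range \<gamma> \<subseteq> topspace X" using \<gamma>(1) unfolding full_solution_def by blast
  ultimately show thesis using that \<gamma>(4) by blast
qed

lemma eSol_essential: "\<delta> \<in> eSol X V P M A \<Longrightarrow> essential X V \<delta>"
  unfolding eSol_def essential_in_def by blast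

lemma path_convex_M_union:
  assumes inv: "invariant X V (topspace X)" and mvf: "multivector_field X V"
  shows "path_convex X V (M_union X V P M A)"
  unfolding path_convex_def
proof (intro ballI allI impI)
  fix x y z assume "x \<in> M_union X V P M A" "z \<in> M_union X V P M A"
    and "(x, y) \<in> (Pi_V_rel X V)\<^sup>* \<and> (y, z) \<in> (Pi_V_rel X V)\<^sup>*"
  moreover obtain \<delta>1 \<delta>2 s t where \<delta>: "\<delta>1 \<in> eSol X V P M A" "\<delta>1 s = x" "\<delta>2 \<in> eSol X V P M A" "\<delta>2 t = z"
    using calculation(1,2) unfolding mem_M_union_iff by blast
  ultimately obtain \<gamma> where "essential X V \<gamma>" "range \<gamma> \<subseteq> topspace X" "\<gamma> 0 = y"
    "alpha_lim X V \<gamma> = alpha_lim X V \<delta>1" "omega_lim X V \<gamma> = omega_lim X V \<delta>2"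
    using essential_connect[OF inv mvf eSol_essential[OF \<delta>(1)] eSol_essential[OF \<delta>(3)], of s y t]
    by blast
  with \<delta> have "\<gamma> \<in> eSol X V P M A" unfolding eSol_def essential_in_def by simp
  then show "y \<in> M_union X V P M A" using \<open>\<gamma> 0 = y\<close> unfolding mem_M_union_iff by blast
qed

lemma isolated_invariant_if_path_convex:
  assumes mvf: "multivector_field X V" and "S \<subseteq> topspace X"
    and "invariant X V S" and convex: "path_convex X V S"
  shows "isolated_invariant X V S"
  unfolding isolated_invariant_def
proof (intro conjI exI[of _ "X closure_of S"])
  show "invariant X V S" by fact
  show "closedin X (X closure_of S)" by simp
  have "Pi_V X V x \<subseteq> X closure_of S" if "x \<in> S" for x
  proof -
    have "x \<in> topspace X" using that assms(2) by blast
    then have "mv V x \<subseteq> S"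
      using path_convexD[OF convex that that] Pi_V_rel_mv[OF mvf] by blast
    moreover have "X closure_of {x} \<subseteq> X closure_of S" using that by (simp add: closure_of_mono)
    ultimately show ?thesis using closure_of_subset[OF assms(2)] unfolding Pi_V_def by blast
  qed
  then show "(\<Union>x\<in>S. Pi_V X V x) \<subseteq> X closure_of S" by blast
  show "\<forall>a b \<gamma>. is_path X V a b \<gamma> \<and> \<gamma> ` {a..b} \<subseteq> X closure_of S \<and> \<gamma> a \<in> S \<and> \<gamma> b \<in> S
      \<longrightarrow> \<gamma> ` {a..b} \<subseteq> S"
  proof (intro allI impI subsetI)
    fix a b \<gamma> y
    assume "is_path X V a b \<gamma> \<and> \<gamma> ` {a..b} \<subseteq> X closure_of S \<and> \<gamma> a \<in> S \<and> \<gamma> b \<in> S"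
      and "y \<in> \<gamma> ` {a..b}"
    moreover from this obtain t where "t \<in> {a..b}" "y = \<gamma> t" by blast
    ultimately have "(\<gamma> a, y) \<in> (Pi_V_rel X V)\<^sup>*" "(y, \<gamma> b) \<in> (Pi_V_rel X V)\<^sup>*" "\<gamma> a \<in> S" "\<gamma> b \<in> S"
      using path_reach[of X V a b \<gamma>] by auto
    then show "y \<in> S" using path_convexD[OF convex] by blast
  qed
qed

lemma eSol_shift:
  assumes "\<delta> \<in> eSol X V P M A"
  shows "(\<lambda>s. \<delta> (s + c)) \<in> eSol X V P M A"
proof -
  have "alpha_lim X V (\<lambda>s. \<delta> (s + c)) = alpha_lim X V \<delta>"
    "omega_lim X V (\<lambda>s. \<delta> (s + c)) = omega_lim X V \<delta>"
    by (simp_all add: alpha_lim_eq omega_lim_eq alpha_points_shift omega_points_shift)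
  moreover have "range (\<lambda>s. \<delta> (s + c)) \<subseteq> range \<delta>" by blast
  moreover have "range (\<lambda>s. \<delta> (s + c)) \<subseteq> topspace X"
    using calculation(3) assms unfolding eSol_def essential_in_def by blast
  moreover have "essential X V (\<lambda>s. \<delta> (s + c))"
    using assms essential_shift unfolding eSol_def essential_in_def by blast
  ultimately show ?thesis
    using assms unfolding eSol_def essential_in_def by simp
qed

lemma invariant_M_union: "invariant X V (M_union X V P M A)"
proof -
  have "x \<in> Inv X V (M_union X V P M A)" if x: "x \<in> M_union X V P M A" for x
  proof -
    obtain \<delta> t where "\<delta> \<in> eSol X V P M A" "\<delta> t = x"
      using x unfolding mem_M_union_iff by blast
    then have \<delta>': "(\<lambda>s. \<delta> (s + t)) \<in> eSol X V P M A" "(\<lambda>s. \<delta> (s + t)) 0 = x"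
      using eSol_shift by auto
    then have "essential_in X V (M_union X V P M A) (\<lambda>s. \<delta> (s + t))"
      using range_subset_M_union[OF \<delta>'(1)] unfolding eSol_def essential_in_def by blast
    then show ?thesis using x \<delta>'(2) unfolding Inv_def by blast
  qed
  moreover have "Inv X V (M_union X V P M A) \<subseteq> M_union X V P M A" unfolding Inv_def by blast
  ultimately show ?thesis unfolding invariant_def by blast
qed

lemma eSol_reach_imp_G_reach:
  assumes inv: "invariant X V (topspace X)" and mvf: "multivector_field X V"
    and \<delta>1: "\<delta>1 \<in> eSol X V P M A" and \<delta>2: "\<delta>2 \<in> eSol X V P M B"
    and "(\<delta>1 s, \<delta>2 t) \<in> (Pi_V_rel X V)\<^sup>*"
  shows "\<exists>p\<in>A. \<exists>q\<in>B. (p, q) \<in> (edges_within (G_edge X V M) P)\<^sup>*"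
proof -
  obtain \<gamma> where \<gamma>: "essential X V \<gamma>" "range \<gamma> \<subseteq> topspace X" "\<gamma> 0 = \<delta>1 s"
    "alpha_lim X V \<gamma> = alpha_lim X V \<delta>1" "omega_lim X V \<gamma> = omega_lim X V \<delta>2"
    by (rule essential_connect[OF inv mvf eSol_essential[OF \<delta>1] eSol_essential[OF \<delta>2]
          rtrancl_refl assms(5)])
  have "P_of P M (alpha_lim X V \<delta>1) \<inter> A \<noteq> {}" "P_of P M (omega_lim X V \<delta>2) \<inter> B \<noteq> {}"
    using \<delta>1 \<delta>2 unfolding eSol_def by simp_all
  then obtain p q where "p \<in> P_of P M (alpha_lim X V \<delta>1) \<inter> A" "q \<in> P_of P M (omega_lim X V \<delta>2) \<inter> B"
    by blast
  then have p: "p \<in> A" "p \<in> P" "M p \<inter> alpha_lim X V \<delta>1 \<noteq> {}"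
    and q: "q \<in> B" "q \<in> P" "M q \<inter> omega_lim X V \<delta>2 \<noteq> {}"
    unfolding P_of_def by simp_all
  have "full_solution X V \<gamma>" using \<gamma>(1) unfolding essential_def by blast
  then have "is_link X V (M p) (M q) \<gamma>"
    using \<gamma>(4,5) p(3) q(3) unfolding is_link_def by (simp add: Int_commute)
  then have "p \<noteq> q \<Longrightarrow> G_edge X V M p q" unfolding G_edge_def by blast
  then have "p \<noteq> q \<Longrightarrow> (p, q) \<in> edges_within (G_edge X V M) P"
    using p(2) q(2) unfolding edges_within_def by simp
  then have "(p, q) \<in> (edges_within (G_edge X V M) P)\<^sup>*" by (cases "p = q") auto
  then show ?thesis using p(1) q(1) by blast
qed

lemma M_union_disjoint:
  assumes inv: "invariant X V (topspace X)" and mvf: "multivector_field X V"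
    and A: "scc (G_edge X V M) P A" and B: "scc (G_edge X V M) P B"
    and "x \<in> M_union X V P M A" "x \<in> M_union X V P M B"
  shows "A = B"
proof -
  obtain \<delta>1 \<delta>2 s t where \<delta>: "\<delta>1 \<in> eSol X V P M A" "\<delta>1 s = x" "\<delta>2 \<in> eSol X V P M B" "\<delta>2 t = x"
    using assms(5,6) unfolding mem_M_union_iff by blast
  obtain p q where "p \<in> A" "q \<in> B" "(p, q) \<in> (edges_within (G_edge X V M) P)\<^sup>*"
    using eSol_reach_imp_G_reach[OF inv mvf \<delta>(1,3), of s t] \<delta>(2,4) by auto
  moreover obtain q' p' where "q' \<in> B" "p' \<in> A" "(q', p') \<in> (edges_within (G_edge X V M) P)\<^sup>*"
    using eSol_reach_imp_G_reach[OF inv mvf \<delta>(3,1), of t s] \<delta>(2,4) by auto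
  ultimately show ?thesis using scc_eq_if_reachable_both_ways[OF A B] by blast
qed

lemma M_subset_M_union:
  assumes fin: "finite (topspace X)" and pd: "morse_predecomposition X V P M"
    and "p \<in> P" "p \<in> A"
  shows "M p \<subseteq> M_union X V P M A"
proof
  fix x assume "x \<in> M p"
  have "Inv X V (M p) = M p"
    using pd \<open>p \<in> P\<close> unfolding morse_predecomposition_def isolated_invariant_def invariant_def by blast
  then obtain \<delta> where \<delta>: "essential_in X V (M p) \<delta>" "\<delta> 0 = x"
    using \<open>x \<in> M p\<close> unfolding Inv_def by blast
  then have "range \<delta> \<subseteq> M p" "range \<delta> \<subseteq> topspace X"
    unfolding essential_in_def essential_def full_solution_def by blast+
  then have "finite (range \<delta>)" using finite_subset[OF _ fin] by blast
  then have "alpha_points \<delta> \<noteq> {}" "omega_points \<delta> \<noteq> {}"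
    by (rule alpha_points_nonempty, rule omega_points_nonempty)
  moreover have "alpha_points \<delta> \<subseteq> M p \<inter> alpha_lim X V \<delta>"
    using alpha_points_subset_range[of \<delta>] \<open>range \<delta> \<subseteq> M p\<close> subset_lc_hull[of "alpha_points \<delta>" X V]
    unfolding alpha_lim_eq by blast
  moreover have "omega_points \<delta> \<subseteq> M p \<inter> omega_lim X V \<delta>"
    using omega_points_subset_range[of \<delta>] \<open>range \<delta> \<subseteq> M p\<close> subset_lc_hull[of "omega_points \<delta>" X V]
    unfolding omega_lim_eq by blast
  ultimately have "p \<in> P_of P M (alpha_lim X V \<delta>) \<inter> A" "p \<in> P_of P M (omega_lim X V \<delta>) \<inter> A"
    using assms(3,4) unfolding P_of_def by blast+
  then have "\<delta> \<in> eSol X V P M A"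
    using \<delta>(1) \<open>range \<delta> \<subseteq> topspace X\<close> unfolding eSol_def essential_in_def by blast
  then show "x \<in> M_union X V P M A" using \<delta>(2) unfolding mem_M_union_iff by blast
qed

lemma essential_link_between_classes:
  assumes pd: "morse_predecomposition X V P M" and cover: "\<Union>Q = P"
    and "essential_in X V (topspace X) \<gamma>"
  obtains A B p q where "A \<in> Q" "B \<in> Q" "p \<in> A" "q \<in> B" "p \<in> P" "q \<in> P"
    "is_link X V (M p) (M q) \<gamma>"
proof -
  have "\<exists>p\<in>P. \<exists>q\<in>P. is_link X V (M p) (M q) \<gamma>"
    using pd assms(3) unfolding morse_predecomposition_def by simp
  then obtain p q where "p \<in> P" "q \<in> P" "is_link X V (M p) (M q) \<gamma>" by blast
  moreover from this have "p \<in> \<Union>Q" "q \<in> \<Union>Q" using cover by simp_all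
  then obtain A B where "A \<in> Q" "p \<in> A" "B \<in> Q" "q \<in> B" by blast
  ultimately show thesis by (intro that)
qed

lemma morse_predecomposition_M_union:
  assumes fin: "finite (topspace X)" and mvf: "multivector_field X V"
    and inv: "invariant X V (topspace X)" and pd: "morse_predecomposition X V P M"
    and sccs: "\<And>C. C \<in> Q \<Longrightarrow> scc (G_edge X V M) P C" and cover: "\<Union>Q = P"
  shows "morse_predecomposition X V Q (M_union X V P M)"
  unfolding morse_predecomposition_def
proof (intro conjI ballI allI impI)
  fix A B assume "A \<in> Q" "B \<in> Q" "A \<noteq> B"
  show "M_union X V P M A \<inter> M_union X V P M B = {}"
  proof (rule equals0I)
    fix x assume "x \<in> M_union X V P M A \<inter> M_union X V P M B"
    then have "A = B" by (intro M_union_disjoint[OF inv mvf sccs[OF \<open>A \<in> Q\<close>] sccs[OF \<open>B \<in> Q\<close>]]) auto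
    with \<open>A \<noteq> B\<close> show False ..
  qed
next
  fix A
  show "isolated_invariant X V (M_union X V P M A)"
    using isolated_invariant_if_path_convex[OF mvf M_union_subset_topspace invariant_M_union
        path_convex_M_union[OF inv mvf]] .
next
  fix \<gamma> assume "essential_in X V (topspace X) \<gamma>"
  then obtain A B p q where "A \<in> Q" "B \<in> Q" "p \<in> A" "q \<in> B" "p \<in> P" "q \<in> P"
    and link: "is_link X V (M p) (M q) \<gamma>"
    by (rule essential_link_between_classes[OF pd cover])
  note M_subset_M_union[OF fin pd \<open>p \<in> P\<close> \<open>p \<in> A\<close>] M_subset_M_union[OF fin pd \<open>q \<in> P\<close> \<open>q \<in> B\<close>]
  then have "is_link X V (M_union X V P M A) (M_union X V P M B) \<gamma>"
    using link unfolding is_link_def by blast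
  then show "\<exists>A\<in>Q. \<exists>B\<in>Q. is_link X V (M_union X V P M A) (M_union X V P M B) \<gamma>"
    using \<open>A \<in> Q\<close> \<open>B \<in> Q\<close> by blast
qed

lemma saturated_M_union:
  assumes fin: "finite (topspace X)" and mvf: "multivector_field X V"
    and inv: "invariant X V (topspace X)" and pd: "morse_predecomposition X V P M"
    and sccs: "\<And>C. C \<in> Q \<Longrightarrow> scc (G_edge X V M) P C" and cover: "\<Union>Q = P"
    and "A \<in> Q"
  shows "saturated X V (M_union X V P M A)"
  unfolding saturated_def
proof (intro conjI allI impI)
  show "invariant X V (M_union X V P M A)" by (rule invariant_M_union)
  fix \<gamma> assume \<gamma>: "essential_in X V (topspace X) \<gamma> \<and>
    alpha_lim X V \<gamma> \<union> omega_lim X V \<gamma> \<subseteq> M_union X V P M A"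
  then have "essential_in X V (topspace X) \<gamma>" by blast
  then obtain A' B' p q where "A' \<in> Q" "B' \<in> Q" "p \<in> A'" "q \<in> B'" "p \<in> P" "q \<in> P"
    and "is_link X V (M p) (M q) \<gamma>"
    by (rule essential_link_between_classes[OF pd cover])
  then obtain x z where x: "x \<in> alpha_lim X V \<gamma>" "x \<in> M p" and z: "z \<in> omega_lim X V \<gamma>" "z \<in> M q"
    unfolding is_link_def by blast
  have "alpha_lim X V \<gamma> \<union> omega_lim X V \<gamma> \<subseteq> M_union X V P M A"
    using \<gamma> by (rule conjunct2)
  then have "x \<in> M_union X V P M A" "z \<in> M_union X V P M A" using x(1) z(1) by auto
  moreover have "x \<in> M_union X V P M A'" "z \<in> M_union X V P M B'"
    using M_subset_M_union[OF fin pd \<open>p \<in> P\<close> \<open>p \<in> A'\<close>] M_subset_M_union[OF fin pd \<open>q \<in> P\<close> \<open>q \<in> B'\<close>]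
      x(2) z(2) by auto
  ultimately have "A' = A" "B' = A"
    using M_union_disjoint[OF inv mvf sccs[OF \<open>A' \<in> Q\<close>] sccs[OF \<open>A \<in> Q\<close>], of x]
      M_union_disjoint[OF inv mvf sccs[OF \<open>B' \<in> Q\<close>] sccs[OF \<open>A \<in> Q\<close>], of z] by blast+
  then have "p \<in> A" "q \<in> A" using \<open>p \<in> A'\<close> \<open>q \<in> B'\<close> by simp_all
  moreover have "p \<in> P_of P M (alpha_lim X V \<gamma>)" "q \<in> P_of P M (omega_lim X V \<gamma>)"
    using x z \<open>p \<in> P\<close> \<open>q \<in> P\<close> unfolding P_of_def by auto
  ultimately have "P_of P M (alpha_lim X V \<gamma>) \<inter> A \<noteq> {}" "P_of P M (omega_lim X V \<gamma>) \<inter> A \<noteq> {}"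
    by auto
  then have "\<gamma> \<in> eSol X V P M A" using \<gamma> unfolding eSol_def by simp
  then show "range \<gamma> \<subseteq> M_union X V P M A" by (rule range_subset_M_union)
qed

lemma admissible_preorder_scc_reach:
  assumes fin: "finite (topspace X)" and mvf: "multivector_field X V"
    and inv: "invariant X V (topspace X)"
    and sccs: "\<And>C. C \<in> Q \<Longrightarrow> scc (G_edge X V M) P C" and "{} \<notin> Q"
  shows "admissible_preorder X V Q (M_union X V P M) (scc_reach (G_edge X V M) P Q)"
  unfolding admissible_preorder_def
proof (intro conjI ballI impI)
  show "scc_reach (G_edge X V M) P Q \<subseteq> Q \<times> Q" unfolding scc_reach_def by blast
  show "refl_on Q (scc_reach (G_edge X V M) P Q)" using \<open>{} \<notin> Q\<close> by (rule refl_on_scc_reach)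
  show "trans (scc_reach (G_edge X V M) P Q)" using sccs by (rule trans_scc_reach)
  fix A B assume "A \<in> Q" "B \<in> Q" "\<exists>\<gamma>. is_link X V (M_union X V P M A) (M_union X V P M B) \<gamma>"
  then obtain \<gamma> y z where "full_solution X V \<gamma>"
    and y: "y \<in> alpha_lim X V \<gamma>" "y \<in> M_union X V P M A"
    and z: "z \<in> omega_lim X V \<gamma>" "z \<in> M_union X V P M B"
    unfolding is_link_def by blast
  then have "(y, z) \<in> (Pi_V_rel X V)\<^sup>*" using alpha_lim_reaches_omega_lim[OF fin mvf] by blast
  moreover obtain \<delta>1 \<delta>2 s t where \<delta>: "\<delta>1 \<in> eSol X V P M A" "\<delta>1 s = y" "\<delta>2 \<in> eSol X V P M B" "\<delta>2 t = z"
    using y(2) z(2) unfolding mem_M_union_iff by blast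
  ultimately obtain p q where "p \<in> A" "q \<in> B" "(p, q) \<in> (edges_within (G_edge X V M) P)\<^sup>*"
    using eSol_reach_imp_G_reach[OF inv mvf \<delta>(1,3), of s t] by auto
  then show "(B, A) \<in> scc_reach (G_edge X V M) P Q"
    using \<open>A \<in> Q\<close> \<open>B \<in> Q\<close> unfolding scc_reach_def by blast
qed

theorem corollary4p14:
  fixes X :: "'a topology" and V :: "'a set set" and P :: "'p set" and M :: "'p \<Rightarrow> 'a set"
    and Q :: "'p set set"
  assumes "finite (topspace X)" and "t0_space X"
    and "multivector_field X V"
    and "invariant X V (topspace X)"
    and "morse_predecomposition X V P M"
    and "Q = {C. scc (G_edge X V M) P C}"
    and "is_partition Q P"
  shows "morse_decomposition X V Q (M_union X V P M)"
proof -
  have sccs: "\<And>C. C \<in> Q \<Longrightarrow> scc (G_edge X V M) P C" using assms(6) by simp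
  have cover: "\<Union>Q = P" and nonempty: "{} \<notin> Q"
    using assms(7) unfolding is_partition_def by simp_all
  have "morse_predecomposition X V Q (M_union X V P M)"
    by (rule morse_predecomposition_M_union[OF assms(1,3,4,5) sccs cover])
  moreover have "saturated X V (M_union X V P M A)" if "A \<in> Q" for A
    by (rule saturated_M_union[OF assms(1,3,4,5) sccs cover that])
  moreover have "admissible_preorder X V Q (M_union X V P M) (scc_reach (G_edge X V M) P Q)"
    by (rule admissible_preorder_scc_reach[OF assms(1,3,4) sccs nonempty])
  moreover have "antisym (scc_reach (G_edge X V M) P Q)"
    by (rule antisym_scc_reach[OF sccs])
  ultimately show ?thesis unfolding morse_decomposition_def by blast
qed

end
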